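(* Let $\mathbf{X}\in\mathbb{R}^{D\times n}$ have rank $r\ge 1$, and let $\beta_1,\dots,\beta_r>0$ be the strictly positive eigenvalues of $\mathbf{X}^{\top}\mathbf{X}$ (with multiplicity). Let $\lambda$ be a random variable uniformly distributed on $[0,1]$, and for $\lambda>0$ set $\mathbf{C}^{\star}=(\mathbf{X}^{\top}\mathbf{X}+\lambda\mathbf{I}_n)^{-1}\mathbf{X}^{\top}\mathbf{X}$. Then there exists a matrix $\mathbf{P}\in\mathbb{R}^{n\times r}$ with $\mathbf{P}^{\top}\mathbf{P}=\mathbf{I}_r$ and $\operatorname{rank}(\mathbf{P})=\operatorname{rank}(\mathbf{C}^{\star})=r$ (almost surely in $\lambda$) such that for every $\delta>0$, $$\Pr\big(\|\mathbf{C}^{\star}-\mathbf{P}\mathbf{P}^{\top}\|_F^2\ge\delta\big)\le\frac{1}{\delta}\sum_{i=1}^{r}g(\beta_i),\qquad g(\beta)=\frac{2\beta+1}{\beta+1}+2\beta\ln\!\Big(\frac{\beta}{\beta+1}\Big).$$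
   Context: $\|\cdot\|_F$ is the Frobenius norm; $\mathbf{I}_k$ is the $k\times k$ identity matrix. The event $\lambda=0$ has probability zero and may be ignored. *)

theory Defs
  imports "HOL-Analysis.Analysis" "HOL-Computational_Algebra.Polynomial"
begin

definition frob_norm :: "real^'n^'m \<Rightarrow> real" where
  "frob_norm A = sqrt (\<Sum>i\<in>UNIV. \<Sum>j\<in>UNIV. (A$i$j)^2)"

definition charpoly :: "real^'n^'n \<Rightarrow> real poly" where
  "charpoly A = det (mat [:0, 1:] - (\<chi> i j. [:A$i$j:]))"

definition g_fun :: "real \<Rightarrow> real" where
  "g_fun b = (2*b + 1) / (b + 1) + 2 * b * ln (b / (b + 1))"

end

theory Submission
  imports Defs
begin

text \<open>Diagonalise \<open>X\<^sup>T X = Q diag(\<beta>) Q\<^sup>T\<close> with \<open>Q\<close> orthogonal; the spectral theorem is proved by the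
  variational argument (a maximiser of \<open>y \<bullet> A y\<close> on the unit sphere of an \<open>A\<close>-invariant subspace is an
  eigenvector). For \<open>\<lambda> > 0\<close> the ridge matrix is then \<open>C = Q diag(\<beta>\<^sub>k / (\<beta>\<^sub>k + \<lambda>)) Q\<^sup>T\<close>, and
  taking for \<open>P\<close> the columns of \<open>Q\<close> with \<open>\<beta>\<^sub>k > 0\<close> gives \<open>P P\<^sup>T = Q diag([\<beta>\<^sub>k > 0]) Q\<^sup>T\<close>. Hence
  \<open>\<parallel>C - P P\<^sup>T\<parallel>\<^sub>F\<^sup>2\<close> is the sum of \<open>(\<lambda> / (\<beta>\<^sub>k + \<lambda>))\<^sup>2\<close> over \<open>\<beta>\<^sub>k > 0\<close>, whose integral over
  \<open>\<lambda> \<in> [0,1]\<close> is the sum of the \<open>g(\<beta>\<^sub>k)\<close>, and Markov's inequality for the uniform distribution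
  gives the bound. The characteristic polynomial is \<open>\<Prod>\<^sub>k (x - \<beta>\<^sub>k)\<close>, so summing over its
  positive roots weighted by their order is summing over the positive \<open>\<beta>\<^sub>k\<close>.\<close>

definition diag_mat :: "('n \<Rightarrow> 'a::zero) \<Rightarrow> 'a^'n^'n" where
  "diag_mat d = (\<chi> i j. if i = j then d i else 0)"

lemma matrix_mult_diag_mat_nth:
  fixes A :: "'a::semiring_1^'n^'m"
  shows "(A ** diag_mat g) $ i $ j = A $ i $ j * g j"
  unfolding matrix_matrix_mult_def diag_mat_def
  by (auto simp: if_distrib if_distribR sum.delta'[OF finite] cong: if_cong)

lemma diag_mat_mult_nth:
  fixes A :: "'a::semiring_1^'m^'n"
  shows "(diag_mat f ** A) $ i $ j = f i * A $ i $ j"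
  unfolding matrix_matrix_mult_def diag_mat_def
  by (auto simp: if_distrib if_distribR sum.delta[OF finite] cong: if_cong)

lemma diag_mat_vector_nth:
  fixes x :: "'a::semiring_1^'n"
  shows "(diag_mat f *v x) $ i = f i * x $ i"
  unfolding matrix_vector_mult_def diag_mat_def
  by (auto simp: if_distrib if_distribR sum.delta[OF finite] cong: if_cong)

lemma diag_mat_mult: "diag_mat f ** diag_mat g = diag_mat (\<lambda>k. f k * g k)"
  by (simp add: vec_eq_iff diag_mat_mult_nth) (simp add: diag_mat_def)

lemma diag_mat_const: "diag_mat (\<lambda>_. c) = mat c"
  by (simp add: diag_mat_def mat_def)

lemma det_diag_mat: "det (diag_mat f) = (\<Prod>k\<in>UNIV. f k)"
  by (simp add: det_diagonal diag_mat_def)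

lemma rank_diag_mat: "rank (diag_mat f :: real^'n^'n) = card {k. f k \<noteq> 0}"
proof -
  have "range ((*v) (diag_mat f)) = {x. \<forall>i. i \<notin> {k. f k \<noteq> 0} \<longrightarrow> x $ i = 0}" (is "_ = ?S")
  proof
    show "range ((*v) (diag_mat f)) \<subseteq> ?S" by (auto simp: diag_mat_vector_nth)
    show "?S \<subseteq> range ((*v) (diag_mat f))"
    proof
      fix y assume "y \<in> ?S"
      then have "y = diag_mat f *v (\<chi> i. y $ i / f i)"
        by (simp add: vec_eq_iff diag_mat_vector_nth)
      then show "y \<in> range ((*v) (diag_mat f))" by blast
    qed
  qed
  then show ?thesis
    using dim_substandard_cart[where 'a=real and d="{k. f k \<noteq> 0}"] by (simp add: rank_dim_range dim_vec_eq)
qed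

lemma frob_norm_nonneg: "frob_norm M \<ge> 0"
  by (simp add: frob_norm_def sum_nonneg)

lemma frob_norm_diag_mat: "(frob_norm (diag_mat f :: real^'n^'n))\<^sup>2 = (\<Sum>k\<in>UNIV. (f k)\<^sup>2)"
proof -
  have "(\<Sum>j\<in>UNIV. (diag_mat f $ i $ j)\<^sup>2) = (f i)\<^sup>2" for i
    by (simp add: diag_mat_def if_distrib[of "\<lambda>x. x\<^sup>2"] cong: if_cong)
  then show ?thesis by (simp add: frob_norm_def sum_nonneg)
qed

section \<open>Spectral theorem for real symmetric matrices\<close>

lemma linear_le_quadratic_imp_zero:
  fixes a b :: real
  assumes le: "\<And>t. a * t \<le> b * t\<^sup>2"
  shows "a = 0"
proof -
  define c where "c = \<bar>b\<bar> + 1"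
  have c: "c > 0" "b \<le> c - 1" by (simp_all add: c_def)
  have "a * (a / c) \<le> b * (a / c)\<^sup>2" by (rule le)
  then have "a\<^sup>2 * c \<le> b * a\<^sup>2"
    using c by (simp add: power2_eq_square field_simps)
  also have "\<dots> \<le> (c - 1) * a\<^sup>2" using c by (simp add: mult_right_mono)
  finally show ?thesis by (simp add: algebra_simps)
qed

lemma symmetric_matrix_inner_commute:
  fixes A :: "real^'n^'n"
  assumes "transpose A = A"
  shows "x \<bullet> (A *v y) = (A *v x) \<bullet> y"
  by (metis assms dot_lmul_matrix transpose_matrix_vector)

lemma symmetric_matrix_max_quadratic_form_eigenvector:
  fixes A :: "real^'n^'n"
  assumes sym: "transpose A = A" and V: "subspace V" and AV: "\<And>y. y \<in> V \<Longrightarrow> A *v y \<in> V"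
    and v: "v \<in> V" "norm v = 1"
    and max: "\<And>y. y \<in> V \<Longrightarrow> norm y = 1 \<Longrightarrow> y \<bullet> (A *v y) \<le> v \<bullet> (A *v v)"
  shows "A *v v = (v \<bullet> (A *v v)) *\<^sub>R v"
proof -
  define M where "M = v \<bullet> (A *v v)"
  have bound: "y \<bullet> (A *v y) \<le> M * (y \<bullet> y)" if "y \<in> V" for y
  proof (cases "y = 0")
    case False
    then have "(y /\<^sub>R norm y) \<bullet> (A *v (y /\<^sub>R norm y)) \<le> M"
      unfolding M_def by (intro max subspace_scale[OF V] that) simp
    with False show ?thesis
      by (simp add: matrix_vector_mult_scaleR dot_square_norm field_simps power2_eq_square)
  qed simp
  define w where "w = A *v v - M *\<^sub>R v"
  have wV: "w \<in> V" unfolding w_def by (intro subspace_diff[OF V] AV v subspace_scale[OF V])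
  have vv: "v \<bullet> v = 1" using v by (simp add: dot_square_norm)
  have wv: "w \<bullet> v = 0"
    using vv by (simp add: w_def M_def inner_diff_left inner_commute[of "A *v v" v])
  have wAv: "w \<bullet> (A *v v) = w \<bullet> w"
    using vv wv by (simp add: w_def M_def inner_diff_right inner_commute)
  have "2 * (w \<bullet> w) * t \<le> (M * (w \<bullet> w) - w \<bullet> (A *v w)) * t\<^sup>2" for t
  proof -
    have "(v + t *\<^sub>R w) \<bullet> (A *v (v + t *\<^sub>R w)) \<le> M * ((v + t *\<^sub>R w) \<bullet> (v + t *\<^sub>R w))"
      by (intro bound subspace_add[OF V] v subspace_scale[OF V] wV)
    then show ?thesis using vv wv wAv
      by (simp add: matrix_vector_right_distrib matrix_vector_mult_scaleR inner_add_left inner_add_right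
          symmetric_matrix_inner_commute[OF sym, of v w] inner_commute power2_eq_square M_def algebra_simps)
  qed
  then have "2 * (w \<bullet> w) = 0" by (rule linear_le_quadratic_imp_zero)
  then show ?thesis by (simp add: w_def M_def)
qed

lemma symmetric_matrix_eigenvector_orthogonal_to:
  fixes A :: "real^'n^'n"
  assumes sym: "transpose A = A" and S: "finite S" "card S < CARD('n)"
    and eigen: "\<And>s. s \<in> S \<Longrightarrow> \<exists>c. A *v s = c *\<^sub>R s"
  obtains v where "norm v = 1" "A *v v = (v \<bullet> (A *v v)) *\<^sub>R v" "\<And>s. s \<in> S \<Longrightarrow> orthogonal s v"
proof -
  define V where "V = {y. \<forall>s\<in>S. orthogonal s y}"
  have V: "subspace V"
    by (auto simp: subspace_def V_def orthogonal_clauses)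
  have AV: "A *v y \<in> V" if y: "y \<in> V" for y
  proof -
    have "s \<bullet> (A *v y) = 0" if s: "s \<in> S" for s
    proof -
      obtain c where "A *v s = c *\<^sub>R s" using eigen[OF s] by blast
      then show ?thesis
        using s y by (simp add: V_def orthogonal_def symmetric_matrix_inner_commute[OF sym])
    qed
    then show ?thesis by (simp add: V_def orthogonal_def)
  qed
  have "dim S < DIM(real^'n)" using dim_le_card[OF span_superset S(1)] S(2) by simp
  then obtain x where "x \<noteq> 0" "\<And>y. y \<in> span S \<Longrightarrow> orthogonal x y"
    using orthogonal_to_subspace_exists by blast
  then have "x /\<^sub>R norm x \<in> V \<inter> sphere 0 1"
    by (auto simp: V_def orthogonal_commute span_base orthogonal_clauses)
  moreover have "compact (V \<inter> sphere 0 1)"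
    by (simp add: V closed_subspace closed_Int_compact)
  moreover have "continuous_on (V \<inter> sphere 0 1) (\<lambda>y. y \<bullet> (A *v y))"
    by (intro continuous_intros linear_continuous_on matrix_vector_mul_bounded_linear)
  ultimately obtain v where v: "v \<in> V \<inter> sphere 0 1"
    and max: "\<And>y. y \<in> V \<inter> sphere 0 1 \<Longrightarrow> y \<bullet> (A *v y) \<le> v \<bullet> (A *v v)"
    using continuous_attains_sup[of "V \<inter> sphere 0 1" "\<lambda>y. y \<bullet> (A *v y)"] by blast
  have "A *v v = (v \<bullet> (A *v v)) *\<^sub>R v"
    using v max by (intro symmetric_matrix_max_quadratic_form_eigenvector[OF sym V AV]) auto
  with v that show ?thesis by (auto simp: V_def)
qed

lemma symmetric_matrix_orthonormal_eigenvectors: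
  fixes A :: "real^'n^'n"
  assumes sym: "transpose A = A" and k: "k \<le> CARD('n)"
  shows "\<exists>S. finite S \<and> card S = k \<and> pairwise orthogonal S \<and>
           (\<forall>s\<in>S. norm s = 1 \<and> A *v s = (s \<bullet> (A *v s)) *\<^sub>R s)"
  using k
proof (induction k)
  case (Suc k)
  then obtain S where S: "finite S" "card S = k" "pairwise orthogonal S"
    "\<forall>s\<in>S. norm s = 1 \<and> A *v s = (s \<bullet> (A *v s)) *\<^sub>R s"
    by auto
  have "card S < CARD('n)" using S(2) Suc.prems by simp
  moreover have "\<exists>c. A *v s = c *\<^sub>R s" if "s \<in> S" for s using S(4) that by blast
  ultimately obtain v where v: "norm v = 1" "A *v v = (v \<bullet> (A *v v)) *\<^sub>R v"
    "\<And>s. s \<in> S \<Longrightarrow> orthogonal s v"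
    using symmetric_matrix_eigenvector_orthogonal_to[OF sym S(1)] by blast
  have "v \<notin> S"
  proof
    assume "v \<in> S"
    then have "v = 0" using v(3) orthogonal_self by blast
    with v(1) show False by simp
  qed
  show ?case
  proof (intro exI[of _ "insert v S"] conjI)
    show "pairwise orthogonal (insert v S)"
      using S(3) v(3) by (auto simp: pairwise_insert orthogonal_commute)
  qed (use S v \<open>v \<notin> S\<close> in auto)
qed auto

theorem symmetric_matrix_orthogonal_diagonalization:
  fixes A :: "real^'n^'n"
  assumes sym: "transpose A = A"
  obtains Q d where "orthogonal_matrix Q" "A = Q ** diag_mat d ** transpose Q"
proof -
  obtain S where S: "finite S" "card S = CARD('n)" "pairwise orthogonal S"
    "\<forall>s\<in>S. norm s = 1 \<and> A *v s = (s \<bullet> (A *v s)) *\<^sub>R s"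
    using symmetric_matrix_orthonormal_eigenvectors[OF sym order.refl] by blast
  obtain h where h: "bij_betw h (UNIV::'n set) S"
    using finite_same_card_bij[of "UNIV::'n set" S] S(1,2) by auto
  define Q :: "real^'n^'n" where "Q = (\<chi> i k. h k $ i)"
  define d where "d k = h k \<bullet> (A *v h k)" for k
  have col: "column k Q = h k" for k by (simp add: Q_def column_def vec_eq_iff)
  have hS: "h k \<in> S" for k using h bij_betwE by blast
  have Q: "orthogonal_matrix Q"
    unfolding orthogonal_matrix_orthonormal_columns col
  proof (intro conjI allI impI)
    show "norm (h k) = 1" for k using S(4) hS by blast
    show "orthogonal (h i) (h j)" if "i \<noteq> j" for i j
    proof -
      have "h i \<noteq> h j" using that h by (metis UNIV_I bij_betw_imp_inj_on inj_on_eq_iff)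
      then show ?thesis using S(3) hS unfolding pairwise_def by blast
    qed
  qed
  have "(A ** Q) $ i $ k = (Q ** diag_mat d) $ i $ k" for i k
  proof -
    have "(A ** Q) $ i $ k = (A *v h k) $ i"
      by (simp add: matrix_matrix_mult_def matrix_vector_mult_def Q_def)
    also have "\<dots> = d k * h k $ i"
    proof -
      have "A *v h k = d k *\<^sub>R h k" using S(4) hS[of k] unfolding d_def by blast
      then show ?thesis by simp
    qed
    also have "\<dots> = (Q ** diag_mat d) $ i $ k"
      by (simp add: matrix_mult_diag_mat_nth Q_def)
    finally show ?thesis .
  qed
  then have AQ: "A ** Q = Q ** diag_mat d" by (simp add: vec_eq_iff)
  have "A = A ** (Q ** transpose Q)" using Q by (simp add: orthogonal_matrix_def)
  also have "\<dots> = Q ** diag_mat d ** transpose Q" by (simp add: matrix_mul_assoc AQ)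
  finally have "A = Q ** diag_mat d ** transpose Q" .
  with Q that show ?thesis by blast
qed

lemma conj_diag_mat_nth:
  fixes Q :: "real^'n^'n"
  shows "(Q ** diag_mat f ** transpose Q) $ i $ j = (\<Sum>k\<in>UNIV. f k * Q $ i $ k * Q $ j $ k)"
  unfolding matrix_matrix_mult_def[of _ "transpose Q"]
  by (simp add: matrix_mult_diag_mat_nth transpose_def mult_ac)

lemma conj_diag_mat_diff:
  fixes Q :: "real^'n^'n"
  shows "Q ** diag_mat f ** transpose Q - Q ** diag_mat g ** transpose Q
       = Q ** diag_mat (\<lambda>k. f k - g k) ** transpose Q"
  by (simp add: vec_eq_iff conj_diag_mat_nth sum_subtractf left_diff_distrib)

lemma conj_diag_mat_add:
  fixes Q :: "real^'n^'n"
  shows "Q ** diag_mat f ** transpose Q + Q ** diag_mat g ** transpose Q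
       = Q ** diag_mat (\<lambda>k. f k + g k) ** transpose Q"
  by (simp add: vec_eq_iff conj_diag_mat_nth sum.distrib distrib_right)

lemma orthogonal_conj_mult:
  fixes Q M N :: "real^'n^'n"
  assumes "orthogonal_matrix Q"
  shows "(Q ** M ** transpose Q) ** (Q ** N ** transpose Q) = Q ** (M ** N) ** transpose Q"
proof -
  have "(Q ** M ** transpose Q) ** (Q ** N ** transpose Q) = Q ** M ** (transpose Q ** Q) ** N ** transpose Q"
    by (simp only: matrix_mul_assoc)
  with assms show ?thesis by (simp add: orthogonal_matrix_def matrix_mul_assoc)
qed

lemma orthogonal_conj_cancel:
  fixes Q M :: "real^'n^'n"
  assumes "orthogonal_matrix Q"
  shows "transpose Q ** (Q ** M ** transpose Q) ** Q = M"
proof -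
  have "transpose Q ** (Q ** M ** transpose Q) ** Q = (transpose Q ** Q) ** M ** (transpose Q ** Q)"
    by (simp only: matrix_mul_assoc)
  with assms show ?thesis by (simp add: orthogonal_matrix_def)
qed

lemma orthogonal_conj_mat:
  fixes Q :: "real^'n^'n"
  assumes "orthogonal_matrix Q"
  shows "Q ** mat c ** transpose Q = mat c"
proof -
  have "mat c = c *\<^sub>R (mat 1 :: real^'n^'n)" by (simp add: vec_eq_iff mat_def)
  then show ?thesis
    using assms by (simp add: matrix_scalar_ac scalar_matrix_assoc[symmetric] orthogonal_matrix_def)
qed

lemma matrix_inv_unique:
  fixes A B :: "real^'n^'n"
  assumes "A ** B = mat 1" "B ** A = mat 1"
  shows "matrix_inv A = B"
proof -
  have inv: "A ** matrix_inv A = mat 1 \<and> matrix_inv A ** A = mat 1"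
    unfolding matrix_inv_def by (rule someI[of _ B]) (use assms in simp)
  have "matrix_inv A = matrix_inv A ** (A ** B)" using assms by simp
  also have "\<dots> = B" using inv by (simp add: matrix_mul_assoc)
  finally show ?thesis .
qed

lemma matrix_inv_orthogonal_conj_diag_mat:
  fixes Q :: "real^'n^'n"
  assumes Q: "orthogonal_matrix Q" and f: "\<And>k. f k \<noteq> 0"
  shows "matrix_inv (Q ** diag_mat f ** transpose Q) = Q ** diag_mat (\<lambda>k. inverse (f k)) ** transpose Q"
proof (rule matrix_inv_unique)
  have "diag_mat f ** diag_mat (\<lambda>k. inverse (f k)) = mat 1"
    "diag_mat (\<lambda>k. inverse (f k)) ** diag_mat f = mat 1"
    using f by (simp_all add: diag_mat_mult diag_mat_const[symmetric])
  then show "(Q ** diag_mat f ** transpose Q) ** (Q ** diag_mat (\<lambda>k. inverse (f k)) ** transpose Q) = mat 1"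
    "(Q ** diag_mat (\<lambda>k. inverse (f k)) ** transpose Q) ** (Q ** diag_mat f ** transpose Q) = mat 1"
    using Q by (simp_all add: orthogonal_conj_mult[OF Q] orthogonal_conj_mat[OF Q, of 1, simplified])
qed

lemma rank_orthogonal_conj:
  fixes Q M :: "real^'n^'n"
  assumes "orthogonal_matrix Q"
  shows "rank (Q ** M ** transpose Q) = rank M"
proof (rule antisym)
  have "rank (Q ** M ** transpose Q) \<le> rank (Q ** M)" by (rule rank_mul_le_left)
  also have "\<dots> \<le> rank M" by (rule rank_mul_le_right)
  finally show "rank (Q ** M ** transpose Q) \<le> rank M" .
  have "M = transpose Q ** (Q ** M ** transpose Q) ** Q"
    using assms by (simp add: orthogonal_conj_cancel)
  also have "rank \<dots> \<le> rank (transpose Q ** (Q ** M ** transpose Q))" by (rule rank_mul_le_left)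
  also have "\<dots> \<le> rank (Q ** M ** transpose Q)" by (rule rank_mul_le_right)
  finally show "rank M \<le> rank (Q ** M ** transpose Q)" .
qed

lemma det_orthogonal_conj:
  fixes Q M :: "real^'n^'n"
  assumes "orthogonal_matrix Q"
  shows "det (Q ** M ** transpose Q) = det M"
proof -
  have "det Q * det (transpose Q) = 1"
    using assms by (metis det_I det_mul orthogonal_matrix_def)
  then show ?thesis by (simp add: det_mul algebra_simps)
qed

lemma frob_norm_sq_trace: "(frob_norm M)\<^sup>2 = trace (transpose M ** M)"
proof -
  have "(frob_norm M)\<^sup>2 = (\<Sum>i\<in>UNIV. \<Sum>j\<in>UNIV. (M $ i $ j)\<^sup>2)"
    by (simp add: frob_norm_def sum_nonneg)
  also have "\<dots> = (\<Sum>j\<in>UNIV. \<Sum>i\<in>UNIV. M $ i $ j * M $ i $ j)"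
    by (subst sum.swap) (simp add: power2_eq_square)
  also have "\<dots> = trace (transpose M ** M)"
    by (simp add: trace_def matrix_matrix_mult_def transpose_def)
  finally show ?thesis .
qed

lemma frob_norm_orthogonal_conj:
  fixes Q M :: "real^'n^'n"
  assumes Q: "orthogonal_matrix Q"
  shows "frob_norm (Q ** M ** transpose Q) = frob_norm M"
proof -
  have "trace (Q ** N ** transpose Q) = trace N" for N :: "real^'n^'n"
  proof -
    have "trace (Q ** N ** transpose Q) = trace (transpose Q ** (Q ** N))" by (rule trace_mul_sym)
    also have "\<dots> = trace N" using Q by (simp add: matrix_mul_assoc orthogonal_matrix_def)
    finally show ?thesis .
  qed
  moreover have "transpose (Q ** M ** transpose Q) = Q ** transpose M ** transpose Q"
    by (simp add: matrix_transpose_mul matrix_mul_assoc)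
  ultimately have "(frob_norm (Q ** M ** transpose Q))\<^sup>2 = (frob_norm M)\<^sup>2"
    by (simp add: frob_norm_sq_trace orthogonal_conj_mult[OF Q])
  then show ?thesis by (simp add: power2_eq_iff_nonneg frob_norm_nonneg)
qed

lemma poly_det: "poly (det M) x = det (\<chi> i j. poly (M $ i $ j) x)"
  by (simp add: det_def poly_sum poly_prod)

lemma poly_charpoly: "poly (charpoly A) x = det (mat x - A)"
proof -
  have "(\<chi> i j. poly ((mat [:0, 1:] - (\<chi> i j. [:A $ i $ j:])) $ i $ j) x) = mat x - A"
    by (simp add: vec_eq_iff mat_def)
  then show ?thesis by (simp add: charpoly_def poly_det)
qed

lemma charpoly_orthogonal_conj_diag_mat:
  fixes Q :: "real^'n^'n"
  assumes Q: "orthogonal_matrix Q"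
  shows "charpoly (Q ** diag_mat d ** transpose Q) = (\<Prod>k\<in>UNIV. [:- d k, 1:])"
proof -
  have "poly (charpoly (Q ** diag_mat d ** transpose Q)) x = poly (\<Prod>k\<in>UNIV. [:- d k, 1:]) x" for x
  proof -
    have "mat x = Q ** diag_mat (\<lambda>_. x) ** transpose Q"
      by (simp add: diag_mat_const orthogonal_conj_mat[OF Q])
    then have "mat x - Q ** diag_mat d ** transpose Q = Q ** diag_mat (\<lambda>k. x - d k) ** transpose Q"
      by (simp only: conj_diag_mat_diff)
    then show ?thesis
      by (simp add: poly_charpoly det_orthogonal_conj[OF Q] det_diag_mat poly_prod)
  qed
  then show ?thesis by (simp add: poly_eq_poly_eq_iff[symmetric] fun_eq_iff)
qed

lemma order_prod_linear_factors:
  fixes d :: "'a \<Rightarrow> real"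
  assumes "finite S"
  shows "order a (\<Prod>i\<in>S. [:- d i, 1:]) = card {i\<in>S. d i = a}"
  using assms
proof (induction S rule: finite_induct)
  case (insert j S)
  have "[:- d j, 1:] * (\<Prod>i\<in>S. [:- d i, 1:]) \<noteq> 0"
    unfolding mult_eq_0_iff using insert.hyps by (simp add: prod_zero_iff)
  then have "order a (\<Prod>i\<in>insert j S. [:- d i, 1:]) = order a [:- d j, 1:] + order a (\<Prod>i\<in>S. [:- d i, 1:])"
    unfolding prod.insert[OF insert.hyps] by (rule order_mult)
  also have "order a [:- d j, 1:] = (if d j = a then 1 else 0)"
    using order_power_n_n[of a 1] by (auto intro: order_0I)
  moreover have "{i\<in>insert j S. d i = a} = (if d j = a then insert j {i\<in>S. d i = a} else {i\<in>S. d i = a})"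
    by auto
  ultimately show ?case
    using insert by simp
qed (simp add: order_0I)

lemma sum_roots_prod_linear_factors:
  fixes d :: "'n::finite \<Rightarrow> real"
  defines "p \<equiv> \<Prod>i\<in>UNIV. [:- d i, 1:]"
  shows "(\<Sum>\<beta>\<in>{\<beta>. P \<beta> \<and> poly p \<beta> = 0}. real (order \<beta> p) * f \<beta>) = (\<Sum>i | P (d i). f (d i))"
proof -
  have roots: "{\<beta>. P \<beta> \<and> poly p \<beta> = 0} = d ` {i. P (d i)}"
    by (auto simp: p_def poly_prod)
  have "(\<Sum>i | P (d i). f (d i)) = (\<Sum>\<beta>\<in>d ` {i. P (d i)}. \<Sum>i | i \<in> {i. P (d i)} \<and> d i = \<beta>. f (d i))"
    by (rule sum.image_gen) simp
  also have "\<dots> = (\<Sum>\<beta>\<in>d ` {i. P (d i)}. real (order \<beta> p) * f \<beta>)"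
  proof (rule sum.cong[OF refl])
    fix \<beta> assume "\<beta> \<in> d ` {i. P (d i)}"
    then have "{i. i \<in> {i. P (d i)} \<and> d i = \<beta>} = {i\<in>UNIV. d i = \<beta>}" by auto
    then show "(\<Sum>i | i \<in> {i. P (d i)} \<and> d i = \<beta>. f (d i)) = real (order \<beta> p) * f \<beta>"
      by (simp add: p_def order_prod_linear_factors)
  qed
  finally show ?thesis by (simp add: roots)
qed

section \<open>Gram matrices and the ridge path\<close>

lemma rank_transpose_mult_self:
  fixes X :: "real^'n^'m"
  shows "rank (transpose X ** X) = rank X"
proof -
  have range: "range ((*v) (transpose X ** X)) = (*v) (transpose X) ` range ((*v) X)"
    by (simp add: image_image matrix_vector_mul_assoc del: transpose_matrix_vector)
  have "inj_on ((*v) (transpose X)) (span (range ((*v) X)))"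
    unfolding linear_inj_on_iff_eq_0[OF matrix_vector_mul_linear subspace_span]
  proof (intro ballI impI)
    fix y assume y: "y \<in> span (range ((*v) X))" "transpose X *v y = 0"
    then obtain x where x: "y = X *v x"
      using span_linear_image[OF matrix_vector_mul_linear, of X UNIV] by auto
    have "y \<bullet> y = (y v* X) \<bullet> x" by (simp add: x dot_lmul_matrix)
    with y(2) show "y = 0" by simp
  qed
  then have "dim ((*v) (transpose X) ` range ((*v) X)) = dim (range ((*v) X))"
    by (rule dim_image_eq[OF matrix_vector_mul_linear])
  then show ?thesis
    by (simp only: rank_dim_range range)
qed

lemma gram_orthogonal_diag_nonneg:
  fixes X :: "real^'n^'m" and Q :: "real^'n^'n"
  assumes Q: "orthogonal_matrix Q" and A: "transpose X ** X = Q ** diag_mat d ** transpose Q"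
  shows "d k \<ge> 0"
proof -
  have "diag_mat d = transpose Q ** (transpose X ** X) ** Q"
    unfolding A by (simp add: orthogonal_conj_cancel[OF Q])
  also have "\<dots> = transpose (X ** Q) ** (X ** Q)"
    by (simp add: matrix_transpose_mul matrix_mul_assoc)
  finally have eq: "diag_mat d = transpose (X ** Q) ** (X ** Q)" .
  have "d k = diag_mat d $ k $ k" by (simp add: diag_mat_def)
  also have "\<dots> = (\<Sum>i\<in>UNIV. ((X ** Q) $ i $ k)\<^sup>2)"
    unfolding eq by (simp add: matrix_matrix_mult_def[of _ "X ** Q"] transpose_def power2_eq_square)
  finally have "d k = (\<Sum>i\<in>UNIV. ((X ** Q) $ i $ k)\<^sup>2)" .
  then show ?thesis by (simp add: sum_nonneg)
qed

lemma rank_orthonormal_columns: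
  fixes P :: "real^'r^'n"
  assumes "transpose P ** P = mat 1"
  shows "rank P = CARD('r)"
proof (rule antisym)
  show "rank P \<le> CARD('r)" using rank_bound[of P] by simp
  have "CARD('r) = rank (transpose P ** P)" by (simp add: assms rank_I)
  also have "\<dots> \<le> rank P" by (rule rank_mul_le_right)
  finally show "CARD('r) \<le> rank P" .
qed

lemma orthogonal_matrix_select_columns:
  fixes Q :: "real^'n^'n"
  assumes Q: "orthogonal_matrix Q" and K: "card K = CARD('r)"
  obtains P :: "real^'r^'n"
  where "transpose P ** P = mat 1" "P ** transpose P = Q ** diag_mat (indicator K) ** transpose Q"
proof -
  have "finite K" by (rule card_ge_0_finite) (simp add: K)
  then obtain e :: "'r \<Rightarrow> 'n" where e: "bij_betw e UNIV K"
    using finite_same_card_bij[of "UNIV :: 'r set" K] K by auto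
  define P :: "real^'r^'n" where "P = (\<chi> i m. Q $ i $ e m)"
  have "(transpose P ** P) $ m $ m' = mat 1 $ m $ m'" for m m'
  proof -
    have "(transpose P ** P) $ m $ m' = (transpose Q ** Q) $ e m $ e m'"
      by (simp add: P_def matrix_matrix_mult_def transpose_def)
    also have "\<dots> = mat 1 $ e m $ e m'" using Q by (simp add: orthogonal_matrix_def)
    also have "\<dots> = mat 1 $ m $ m'"
      using bij_betw_imp_inj_on[OF e] by (simp add: mat_def inj_eq)
    finally show ?thesis .
  qed
  then have "transpose P ** P = mat 1" by (simp add: vec_eq_iff)
  moreover have "(P ** transpose P) $ i $ j = (Q ** diag_mat (indicator K) ** transpose Q) $ i $ j" for i j
  proof -
    have "(P ** transpose P) $ i $ j = (\<Sum>m\<in>UNIV. Q $ i $ e m * Q $ j $ e m)"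
      by (simp add: P_def matrix_matrix_mult_def transpose_def)
    also have "\<dots> = (\<Sum>k\<in>K. Q $ i $ k * Q $ j $ k)"
      by (rule sum.reindex_bij_betw[OF e])
    also have "\<dots> = (\<Sum>k\<in>UNIV. indicator K k * Q $ i $ k * Q $ j $ k)"
      by (simp add: mult.assoc)
    finally show ?thesis by (simp add: conj_diag_mat_nth)
  qed
  then have "P ** transpose P = Q ** diag_mat (indicator K) ** transpose Q"
    by (simp add: vec_eq_iff)
  ultimately show ?thesis by (rule that)
qed

lemma ridge_orthogonal_conj_diag_mat:
  fixes Q :: "real^'n^'n"
  assumes Q: "orthogonal_matrix Q" and A: "A = Q ** diag_mat d ** transpose Q"
    and d: "\<And>k. 0 \<le> d k" and l: "l > 0"
  shows "matrix_inv (A + l *\<^sub>R mat 1) ** A = Q ** diag_mat (\<lambda>k. d k / (d k + l)) ** transpose Q"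
proof -
  have nz: "d k + l \<noteq> 0" for k using d[of k] l by simp
  have "l *\<^sub>R mat 1 = (mat l :: real^'n^'n)"
    by (simp add: vec_eq_iff mat_def)
  also have "\<dots> = Q ** diag_mat (\<lambda>_. l) ** transpose Q"
    by (simp add: diag_mat_const orthogonal_conj_mat[OF Q])
  finally have "l *\<^sub>R mat 1 = Q ** diag_mat (\<lambda>_. l) ** transpose Q" .
  then have "A + l *\<^sub>R mat 1 = Q ** diag_mat (\<lambda>k. d k + l) ** transpose Q"
    by (simp only: A conj_diag_mat_add)
  then have "matrix_inv (A + l *\<^sub>R mat 1) = Q ** diag_mat (\<lambda>k. inverse (d k + l)) ** transpose Q"
    by (simp add: matrix_inv_orthogonal_conj_diag_mat[OF Q] nz)
  then show ?thesis
    by (simp add: A orthogonal_conj_mult[OF Q] diag_mat_mult field_simps)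
qed

lemma rank_ridge_orthogonal_conj_diag_mat:
  fixes Q :: "real^'n^'n"
  assumes Q: "orthogonal_matrix Q" and A: "A = Q ** diag_mat d ** transpose Q"
    and d: "\<And>k. 0 \<le> d k" and l: "l > 0"
  shows "rank (matrix_inv (A + l *\<^sub>R mat 1) ** A) = card {k. 0 < d k}"
proof -
  have "d k / (d k + l) \<noteq> 0 \<longleftrightarrow> 0 < d k" for k
    using d[of k] l by (auto simp: less_le)
  then have "{k. d k / (d k + l) \<noteq> 0} = {k. 0 < d k}" by blast
  then show ?thesis
    by (simp add: ridge_orthogonal_conj_diag_mat[OF Q A d l] rank_orthogonal_conj[OF Q] rank_diag_mat)
qed

lemma frob_norm_ridge_minus_projection:
  fixes Q :: "real^'n^'n"
  assumes Q: "orthogonal_matrix Q" and A: "A = Q ** diag_mat d ** transpose Q"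
    and d: "\<And>k. 0 \<le> d k" and l: "l > 0"
  shows "(frob_norm (matrix_inv (A + l *\<^sub>R mat 1) ** A - Q ** diag_mat (indicator {k. 0 < d k}) ** transpose Q))\<^sup>2
       = (\<Sum>k | 0 < d k. (l / (d k + l))\<^sup>2)"
proof -
  have "(d k / (d k + l) - indicator {k. 0 < d k} k)\<^sup>2 = indicator {k. 0 < d k} k * (l / (d k + l))\<^sup>2" for k
    using d[of k] l by (auto simp: indicator_def field_simps power2_eq_square)
  then show ?thesis
    by (simp add: ridge_orthogonal_conj_diag_mat[OF Q A d l] conj_diag_mat_diff
        frob_norm_orthogonal_conj[OF Q] frob_norm_diag_mat)
qed

section \<open>The integral bound\<close>

lemma g_fun_antiderivative:
  fixes b x :: real
  assumes pos: "b + x > 0"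
  shows "((\<lambda>x. x - 2 * b * ln (b + x) - b\<^sup>2 / (b + x)) has_real_derivative (x / (b + x))\<^sup>2) (at x)"
proof -
  have deriv: "((\<lambda>x. x - 2 * b * ln (b + x) - b\<^sup>2 / (b + x)) has_real_derivative
        1 - 2 * b * (1 / (b + x)) - (- (b\<^sup>2 * 1) / (b + x)\<^sup>2)) (at x)"
    using pos by (auto intro!: derivative_eq_intros simp: power2_eq_square)
  have "1 - 2 * b * (1 / y) - (- (b\<^sup>2 * 1) / y\<^sup>2) = ((y - b) / y)\<^sup>2" if "y \<noteq> 0" for y
    using that by (simp add: field_simps power2_eq_square)
  from this[of "b + x"] pos deriv show ?thesis by simp
qed

lemma g_fun_has_integral:
  fixes b :: real
  assumes b: "b > 0"
  shows "((\<lambda>x. (x / (b + x))\<^sup>2) has_integral g_fun b) {0..1}"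
proof -
  define F where "F x = x - 2 * b * ln (b + x) - b\<^sup>2 / (b + x)" for x
  have "((\<lambda>x. (x / (b + x))\<^sup>2) has_integral F 1 - F 0) {0..1}"
  proof (rule fundamental_theorem_of_calculus)
    fix x :: real assume "x \<in> {0..1}"
    then have "(F has_real_derivative (x / (b + x))\<^sup>2) (at x)"
      unfolding F_def using b by (intro g_fun_antiderivative) auto
    then show "(F has_vector_derivative (x / (b + x))\<^sup>2) (at x within {0..1})"
      by (simp add: has_real_derivative_iff_has_vector_derivative[symmetric] has_field_derivative_at_within)
  qed simp
  moreover have "F 1 - F 0 = g_fun b"
  proof -
    have "(2 * b + 1) / (b + 1) = 1 + b - b\<^sup>2 / (b + 1)"
      using b by (simp add: field_simps power2_eq_square)
    then show ?thesis
      using b by (simp add: F_def g_fun_def ln_div power2_eq_square algebra_simps)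
  qed
  ultimately show ?thesis by simp
qed

text \<open>The bound on \<open>G\<close> is only needed on \<open>S \<inter> {0<..1}\<close>: the endpoint \<open>0\<close>, where the ridge
  matrix involves \<open>matrix_inv\<close> of a possibly singular matrix, is a null set.\<close>

lemma measure_uniform_measure_unit_interval_Markov:
  fixes G :: "real \<Rightarrow> real"
  assumes G: "continuous_on {0..1} G" "\<And>x. x \<in> {0..1} \<Longrightarrow> 0 \<le> G x" and \<delta>: "\<delta> > 0"
    and S: "\<And>x. x \<in> S \<Longrightarrow> x \<in> {0<..1} \<Longrightarrow> \<delta> \<le> G x"
  shows "measure (uniform_measure lborel {0..1}) S \<le> integral {0..1} G / \<delta>"
proof -
  define u where "u x = indicator {0..1} x *\<^sub>R G x" for x
  have int: "integrable lborel u"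
    using borel_integrable_atLeastAtMost'[OF G(1)] unfolding set_integrable_def u_def .
  then have [measurable]: "u \<in> borel_measurable lborel" by (rule borel_measurable_integrable)
  define T where "T = {x. \<delta> \<le> u x} \<union> {0} \<union> - {0..1}"
  have T: "T \<in> sets lborel" unfolding T_def by measurable
  have fin: "finite_measure (uniform_measure lborel {0..1::real})"
    by (rule finite_measureI) simp
  have "S \<subseteq> T" using S by (force simp: T_def u_def)
  then have "measure (uniform_measure lborel {0..1}) S \<le> measure (uniform_measure lborel {0..1}) T"
    using finite_measure.finite_measure_mono[OF fin] T by simp
  also have "\<dots> = measure lborel ({x. \<delta> \<le> u x} \<union> {0})"
  proof -
    have "{0..1} \<inter> T = {x. \<delta> \<le> u x} \<union> {0}"
      using \<delta> by (auto simp: T_def u_def indicator_def split: if_splits)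
    then show ?thesis using T by simp
  qed
  also have "\<dots> = measure lborel {x \<in> space lborel. \<delta> \<le> u x}"
    by (subst measure_Un_null_set) auto
  also have "\<dots> \<le> (\<integral>x. u x \<partial>lborel) / \<delta>"
    by (rule integral_Markov_inequality_measure[OF int, of UNIV])
      (use G(2) \<delta> in \<open>auto simp: u_def indicator_def\<close>)
  also have "(\<integral>x. u x \<partial>lborel) = integral {0..1} G"
    using set_borel_integral_eq_integral(2)[OF borel_integrable_atLeastAtMost'[OF G(1)]]
    by (simp add: set_lebesgue_integral_def u_def)
  finally show ?thesis .
qed

lemma measure_ridge_deviation_le:
  fixes d :: "'n::finite \<Rightarrow> real"
  assumes \<delta>: "\<delta> > 0"
    and S: "\<And>l. l \<in> S \<Longrightarrow> l \<in> {0<..1} \<Longrightarrow> \<delta> \<le> (\<Sum>k | 0 < d k. (l / (d k + l))\<^sup>2)"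
  shows "measure (uniform_measure lborel {0..1}) S \<le> (1 / \<delta>) * (\<Sum>k | 0 < d k. g_fun (d k))"
proof -
  define G where "G l = (\<Sum>k | 0 < d k. (l / (d k + l))\<^sup>2)" for l
  have "(G has_integral (\<Sum>k | 0 < d k. g_fun (d k))) {0..1}"
    unfolding G_def by (intro has_integral_sum g_fun_has_integral) auto
  moreover have "measure (uniform_measure lborel {0..1}) S \<le> integral {0..1} G / \<delta>"
  proof (rule measure_uniform_measure_unit_interval_Markov[OF _ _ \<delta>])
    show "continuous_on {0..1} G"
      unfolding G_def by (intro continuous_intros) (auto simp: add_pos_nonneg)
  qed (use S in \<open>auto simp: G_def sum_nonneg\<close>)
  ultimately show ?thesis by (simp add: integral_unique)
qed

theorem proposition3:
  fixes X :: "real^'n^'d" and r :: nat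
  assumes "rank X = r" and "r \<ge> 1" and "CARD('r) = r"
  defines "C \<equiv> (\<lambda>l::real. matrix_inv (transpose X ** X + l *\<^sub>R mat 1) ** (transpose X ** X))"
  shows "\<exists>P :: real^'r^'n.
     transpose P ** P = mat 1 \<and> rank P = r \<and>
     (AE l in uniform_measure lborel {0..1}. rank (C l) = r) \<and>
     (\<forall>\<delta>>0. measure (uniform_measure lborel {0..1})
                {l. frob_norm (C l - P ** transpose P) ^ 2 \<ge> \<delta>}
           \<le> (1 / \<delta>) * (\<Sum>\<beta>\<in>{\<beta>. \<beta> > 0 \<and> poly (charpoly (transpose X ** X)) \<beta> = 0}.
                  real (order \<beta> (charpoly (transpose X ** X))) * g_fun \<beta>))"
proof -
  define A where "A = transpose X ** X"
  obtain Q d where Q: "orthogonal_matrix Q" and A: "A = Q ** diag_mat d ** transpose Q"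
    using symmetric_matrix_orthogonal_diagonalization[of A] by (auto simp: A_def matrix_transpose_mul)
  have d: "0 \<le> d k" for k
    using gram_orthogonal_diag_nonneg[OF Q] A by (simp add: A_def)
  have "{k. d k \<noteq> 0} = {k. 0 < d k}" using d by (auto simp: less_le)
  then have card: "card {k. 0 < d k} = r"
    using assms(1) rank_transpose_mult_self[of X] rank_orthogonal_conj[OF Q] rank_diag_mat[of d]
    by (simp add: A_def[symmetric] A)
  then obtain P :: "real^'r^'n" where PtP: "transpose P ** P = mat 1"
    and PPt: "P ** transpose P = Q ** diag_mat (indicator {k. 0 < d k}) ** transpose Q"
    using orthogonal_matrix_select_columns[OF Q, of "{k. 0 < d k}"] assms(3) by metis
  have C: "C l = matrix_inv (A + l *\<^sub>R mat 1) ** A" for l by (simp add: C_def A_def)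
  have "AE l in uniform_measure lborel {0..1}. rank (C l) = r"
  proof (rule AE_uniform_measureI)
    show "AE l in lborel. l \<in> {0..1} \<longrightarrow> rank (C l) = r"
      using AE_lborel_singleton[of 0]
      by eventually_elim (auto simp: C rank_ridge_orthogonal_conj_diag_mat[OF Q A d] card)
  qed simp
  moreover have "measure (uniform_measure lborel {0..1}) {l. frob_norm (C l - P ** transpose P) ^ 2 \<ge> \<delta>}
      \<le> (1 / \<delta>) * (\<Sum>k | 0 < d k. g_fun (d k))" if "\<delta> > 0" for \<delta>
    using that by (rule measure_ridge_deviation_le)
      (simp add: C PPt frob_norm_ridge_minus_projection[OF Q A d])
  moreover have "charpoly A = (\<Prod>k\<in>UNIV. [:- d k, 1:])"
    by (simp add: A charpoly_orthogonal_conj_diag_mat[OF Q])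
  ultimately show ?thesis
    using PtP rank_orthonormal_columns[OF PtP] assms(3)
    by (intro exI[of _ P]) (simp add: A_def[symmetric] sum_roots_prod_linear_factors)
qed

end
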